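(* Let $(\mathbf C,I)$ be a finite-type based chain complex of real inner product spaces and let $M=\{\alpha\to\beta\}$ be a single $(n+1,n)$-pairing ($\alpha\in I_{n+1}$, $\beta\in I_n$, $\partial_{\beta,\alpha}$ an isomorphism). Then for all $i$, $$\dim\operatorname{Im}(\partial^M_i)^\dagger=\dim\operatorname{Im}\partial^M_i=\begin{cases}\dim\operatorname{Im}\partial_i-\dim C_\beta & i=n+1,\\ \dim\operatorname{Im}\partial_i & \text{otherwise,}\end{cases}$$ where $\partial^M$ is the boundary of the Morse complex $\mathbf C^M$ (with the restricted inner product).
   Context: Based chain complex: chain complex $(\mathbf C,\partial)$ of finite-dimensional real inner product spaces $\mathbf C_n$, $n\ge0$, with disjoint finite index sets $I_n$ and $\mathbf C_n=\bigoplus_{\sigma\in I_n}C_\sigma$; $\partial_{\tau,\sigma}=\pi_\tau\partial i_\sigma:C_\sigma\to C_\tau$. For the single pairing $M=\{\alpha\to\beta\}$, the Morse complex $\mathbf C^M$ has summands $C_\sigma$ for $\sigma\in I\setminus\{\alpha,\beta\}$ and boundary components $\partial^M_{\tau,\sigma}=\partial_{\tau,\sigma}-\partial_{\tau,\alpha}\partial_{\beta,\alpha}^{-1}\partial_{\beta,\sigma}$; it is chain homotopy equivalent to $\mathbf C$. $\dagger$ denotes adjoint. *)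

theory Defs
  imports "HOL-Analysis.Analysis"
begin

text \<open>A based chain complex is modelled inside an ambient finite-dimensional real inner
product space 'v: cells \<sigma> \<in> I (finite), with degree deg \<sigma> (so I_n = {\<sigma>\<in>I. deg \<sigma> = n}),
summands Csp \<sigma> (pairwise orthogonal subspaces of 'v), C_n = span of the summands of degree n,
and boundary bd, a linear map of 'v whose behaviour on the complex is what matters.\<close>

definition orth_proj :: "'v::euclidean_space set \<Rightarrow> 'v \<Rightarrow> 'v" where
  "orth_proj S x = (THE y. y \<in> S \<and> (\<forall>z\<in>S. (x - y) \<bullet> z = 0))"

definition chain_space :: "('i \<Rightarrow> 'v::euclidean_space set) \<Rightarrow> 'i set \<Rightarrow> 'v set" where
  "chain_space Csp J = span (\<Union>\<sigma>\<in>J. Csp \<sigma>)"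

definition Cn :: "'i set \<Rightarrow> ('i \<Rightarrow> nat) \<Rightarrow> ('i \<Rightarrow> 'v::euclidean_space set) \<Rightarrow> nat \<Rightarrow> 'v set" where
  "Cn I deg Csp k = chain_space Csp {\<sigma>\<in>I. deg \<sigma> = k}"

definition based_chain_complex ::
  "'i set \<Rightarrow> ('i \<Rightarrow> nat) \<Rightarrow> ('i \<Rightarrow> 'v::euclidean_space set) \<Rightarrow> ('v \<Rightarrow> 'v) \<Rightarrow> bool" where
  "based_chain_complex I deg Csp bd \<longleftrightarrow>
     finite I \<and>
     (\<forall>\<sigma>\<in>I. subspace (Csp \<sigma>)) \<and>
     (\<forall>\<sigma>\<in>I. \<forall>\<tau>\<in>I. \<sigma> \<noteq> \<tau> \<longrightarrow> (\<forall>x\<in>Csp \<sigma>. \<forall>y\<in>Csp \<tau>. x \<bullet> y = 0)) \<and>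
     linear bd \<and>
     (\<forall>\<sigma>\<in>I. \<forall>x\<in>Csp \<sigma>. bd x \<in> (if deg \<sigma> = 0 then {0} else Cn I deg Csp (deg \<sigma> - 1))) \<and>
     (\<forall>x\<in>chain_space Csp I. bd (bd x) = 0)"

definition bd_comp :: "('i \<Rightarrow> 'v::euclidean_space set) \<Rightarrow> ('v \<Rightarrow> 'v) \<Rightarrow> 'i \<Rightarrow> 'v \<Rightarrow> 'v" where
  "bd_comp Csp bd \<tau> x = orth_proj (Csp \<tau>) (bd x)"

definition single_pairing ::
  "'i set \<Rightarrow> ('i \<Rightarrow> nat) \<Rightarrow> ('i \<Rightarrow> 'v::euclidean_space set) \<Rightarrow> ('v \<Rightarrow> 'v) \<Rightarrow> nat \<Rightarrow> 'i \<Rightarrow> 'i \<Rightarrow> bool" where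
  "single_pairing I deg Csp bd n \<alpha> \<beta> \<longleftrightarrow>
     \<alpha> \<in> I \<and> \<beta> \<in> I \<and> deg \<alpha> = n + 1 \<and> deg \<beta> = n \<and>
     bij_betw (bd_comp Csp bd \<beta>) (Csp \<alpha>) (Csp \<beta>)"

text \<open>Morse complex summands C^M_k and boundary
  \<partial>^M_{\<tau>,\<sigma>} = \<partial>_{\<tau>,\<sigma>} - \<partial>_{\<tau>,\<alpha>} \<partial>_{\<beta>,\<alpha>}^{-1} \<partial>_{\<beta>,\<sigma>}, assembled over \<tau> \<notin> {\<alpha>,\<beta>}.\<close>
definition CM :: "'i set \<Rightarrow> ('i \<Rightarrow> nat) \<Rightarrow> ('i \<Rightarrow> 'v::euclidean_space set) \<Rightarrow> 'i \<Rightarrow> 'i \<Rightarrow> nat \<Rightarrow> 'v set" where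
  "CM I deg Csp \<alpha> \<beta> k = chain_space Csp {\<sigma>\<in>I - {\<alpha>, \<beta>}. deg \<sigma> = k}"

definition morse_bd :: "'i set \<Rightarrow> ('i \<Rightarrow> 'v::euclidean_space set) \<Rightarrow> ('v \<Rightarrow> 'v) \<Rightarrow> 'i \<Rightarrow> 'i \<Rightarrow> 'v \<Rightarrow> 'v" where
  "morse_bd I Csp bd \<alpha> \<beta> x =
     orth_proj (chain_space Csp (I - {\<alpha>, \<beta>}))
       (bd x - bd (inv_into (Csp \<alpha>) (bd_comp Csp bd \<beta>) (bd_comp Csp bd \<beta> x)))"

definition CM_tgt :: "'i set \<Rightarrow> ('i \<Rightarrow> nat) \<Rightarrow> ('i \<Rightarrow> 'v::euclidean_space set) \<Rightarrow> 'i \<Rightarrow> 'i \<Rightarrow> nat \<Rightarrow> 'v set" where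
  "CM_tgt I deg Csp \<alpha> \<beta> i = (if i = 0 then {0} else CM I deg Csp \<alpha> \<beta> (i - 1))"

definition restr_adjoint :: "'v::euclidean_space set \<Rightarrow> ('v \<Rightarrow> 'v) \<Rightarrow> 'v \<Rightarrow> 'v" where
  "restr_adjoint V T y = (THE u. u \<in> V \<and> (\<forall>x\<in>V. T x \<bullet> y = x \<bullet> u))"

end

theory Submission
  imports Defs
begin

text \<open>
  Outside degrees n + 1 and n + 2 the Morse boundary is just bd, and in degree n the removed
  summand Csp \<beta> contributes no new boundaries, since every chain on \<beta> is homologous to a
  chain on the remaining cells. In degree n + 2 the Morse boundary is bd followed by the
  orthogonal projection onto the remaining cells; it is injective on boundaries, because a
  cycle a supported on \<alpha> has bd_comp Csp bd \<beta> a = 0 and hence vanishes. In degree n + 1 the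
  image of the Morse boundary is the kernel of the projection of the image of bd onto
  Csp \<beta>; this projection is onto, so rank-nullity accounts for the loss of dim (Csp \<beta>).
  Finally, a map between subspaces and its adjoint have the same rank, because the kernel of
  the adjoint is the orthogonal complement of the image.
\<close>

section \<open>Orthogonal projections and adjoints on subspaces\<close>

lemma orth_proj_unique:
  fixes S :: "'v::euclidean_space set"
  assumes "subspace S" "y \<in> S" "\<forall>z\<in>S. (x - y) \<bullet> z = 0"
  shows "orth_proj S x = y"
  unfolding orth_proj_def
proof (rule the_equality)
  fix y' assume y': "y' \<in> S \<and> (\<forall>z\<in>S. (x - y') \<bullet> z = 0)"
  have "y' - y \<in> S" using assms y' subspace_diff by blast
  then have "(y' - y) \<bullet> (y' - y) = (x - y) \<bullet> (y' - y) - (x - y') \<bullet> (y' - y)"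
    by (simp add: inner_diff_left)
  also have "\<dots> = 0" using assms y' \<open>y' - y \<in> S\<close> by simp
  finally show "y' = y" by simp
qed (use assms in simp)

lemma orth_proj_works:
  fixes S :: "'v::euclidean_space set"
  assumes "subspace S"
  shows "orth_proj S x \<in> S" and "\<forall>z\<in>S. (x - orth_proj S x) \<bullet> z = 0"
proof -
  obtain y z where "y \<in> span S" "\<And>w. w \<in> span S \<Longrightarrow> orthogonal z w" "x = y + z"
    using orthogonal_subspace_decomp_exists by blast
  moreover have "span S = S" using assms by simp
  ultimately have "y \<in> S" "\<forall>w\<in>S. (x - y) \<bullet> w = 0"
    by (auto simp: orthogonal_def)
  with orth_proj_unique[OF assms] show "orth_proj S x \<in> S" "\<forall>z\<in>S. (x - orth_proj S x) \<bullet> z = 0"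
    by auto
qed

lemma orth_proj_add_orthogonal:
  fixes S :: "'v::euclidean_space set"
  assumes "subspace S" "y \<in> S" "\<forall>z\<in>S. w \<bullet> z = 0"
  shows "orth_proj S (y + w) = y"
  using assms by (intro orth_proj_unique) auto

lemma orth_proj_id:
  fixes S :: "'v::euclidean_space set"
  assumes "subspace S" "y \<in> S"
  shows "orth_proj S y = y"
  using orth_proj_add_orthogonal[OF assms, of 0] by simp

lemma linear_orth_proj:
  fixes S :: "'v::euclidean_space set"
  assumes "subspace S"
  shows "linear (orth_proj S)"
proof
  fix x y :: 'v and c :: real
  note proj = orth_proj_works[OF assms]
  show "orth_proj S (x + y) = orth_proj S x + orth_proj S y"
    using proj[of x] proj[of y] assms
    by (intro orth_proj_unique) (auto simp: subspace_add inner_diff_left algebra_simps)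
  show "orth_proj S (c *\<^sub>R x) = c *\<^sub>R orth_proj S x"
    using proj[of x] assms
    by (intro orth_proj_unique) (auto simp: subspace_scale inner_diff_left algebra_simps)
qed

lemma dim_kernel_add_dim_image:
  fixes h :: "'a::euclidean_space \<Rightarrow> 'b::euclidean_space"
  assumes h: "linear h" and S: "subspace S"
  shows "dim {x \<in> S. h x = 0} + dim (h ` S) = dim S"
proof -
  define K where "K = {x \<in> S. h x = 0}"
  define W where "W = {y \<in> S. \<forall>x\<in>K. orthogonal x y}"
  have K: "subspace K"
    unfolding K_def using subspace_inter[OF S linear_subspace_kernel[OF h]]
    by (simp add: Collect_conj_eq Int_commute)
  have W: "subspace W"
    unfolding W_def using subspace_inter[OF S subspace_orthogonal_to_vectors[of K]]
    by (simp add: Collect_conj_eq Int_commute)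
  have "dim W + dim K = dim S"
    unfolding W_def by (rule dim_subspace_orthogonal_to_vectors[OF K S]) (auto simp: K_def)
  moreover have "h ` S = h ` W"
  proof
    show "h ` S \<subseteq> h ` W"
    proof
      fix v assume "v \<in> h ` S"
      then obtain s where s: "s \<in> S" "v = h s" by blast
      define p where "p = orth_proj K s"
      have p: "p \<in> K" "\<forall>z\<in>K. (s - p) \<bullet> z = 0"
        using orth_proj_works[OF K] p_def by auto
      then have "s - p \<in> W"
        using s S unfolding W_def K_def by (auto simp: subspace_diff orthogonal_def inner_commute)
      moreover have "h (s - p) = v" using p s h by (simp add: K_def linear_diff)
      ultimately show "v \<in> h ` W" by (metis image_eqI)
    qed
  qed (auto simp: W_def)
  moreover have "inj_on h W"
    unfolding linear_inj_on_iff_eq_0[OF h W] by (auto simp: W_def K_def orthogonal_def)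
  then have "dim (h ` W) = dim W" using dim_image_eq[OF h] W by (simp add: span_eq_iff[THEN iffD2])
  ultimately show ?thesis by (simp add: K_def)
qed

lemma restr_adjoint_eq_orth_proj:
  fixes L :: "'v::euclidean_space \<Rightarrow> 'v"
  assumes "linear L"
  shows "restr_adjoint V L y = orth_proj V (adjoint L y)"
proof -
  have "(adjoint L y - u) \<bullet> x = L x \<bullet> y - x \<bullet> u" for u x
    by (metis adjoint_works[OF assms] inner_commute inner_diff_left)
  then show ?thesis
    unfolding restr_adjoint_def orth_proj_def by simp
qed

lemma restr_adjoint_works:
  fixes L :: "'v::euclidean_space \<Rightarrow> 'v"
  assumes L: "linear L" and V: "subspace V"
  shows "linear (restr_adjoint V L)" and "restr_adjoint V L y \<in> V"
    and "x \<in> V \<Longrightarrow> L x \<bullet> y = x \<bullet> restr_adjoint V L y"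
proof -
  have eq: "restr_adjoint V L = orth_proj V \<circ> adjoint L"
    using restr_adjoint_eq_orth_proj[OF L] by fastforce
  show "linear (restr_adjoint V L)"
    unfolding eq using adjoint_linear[OF L] linear_orth_proj[OF V] by (rule linear_compose)
  show "restr_adjoint V L y \<in> V" using orth_proj_works(1)[OF V] eq by simp
  assume "x \<in> V"
  then have "(adjoint L y - restr_adjoint V L y) \<bullet> x = 0"
    using orth_proj_works(2)[OF V] eq by simp
  then show "L x \<bullet> y = x \<bullet> restr_adjoint V L y"
    by (metis adjoint_works[OF L] inner_commute inner_diff_left eq_iff_diff_eq_0)
qed

lemma dim_image_adjoint_pair:
  fixes S T :: "'v::euclidean_space \<Rightarrow> 'v"
  assumes A: "subspace A" and B: "subspace B" and "linear S" "linear T"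
    and SA: "S ` A \<subseteq> B" and TB: "T ` B \<subseteq> A"
    and adj: "\<And>a b. a \<in> A \<Longrightarrow> b \<in> B \<Longrightarrow> S a \<bullet> b = a \<bullet> T b"
  shows "dim (T ` B) = dim (S ` A)"
proof -
  have "{b \<in> B. T b = 0} = {b \<in> B. \<forall>x\<in>S ` A. orthogonal x b}"
  proof (intro Collect_cong conj_cong refl iffI)
    fix b assume b: "b \<in> B" and "\<forall>x\<in>S ` A. orthogonal x b"
    moreover have "T b \<in> A" using TB b by blast
    ultimately have "S (T b) \<bullet> b = 0" by (simp add: orthogonal_def)
    then have "T b \<bullet> T b = 0" using adj[OF \<open>T b \<in> A\<close> b] by simp
    then show "T b = 0" by simp
  qed (use adj in \<open>auto simp: orthogonal_def\<close>)
  then have "dim {b \<in> B. T b = 0} + dim (S ` A) = dim B"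
    using dim_subspace_orthogonal_to_vectors[OF linear_subspace_image[OF \<open>linear S\<close> A] B SA]
    by simp
  with dim_kernel_add_dim_image[OF \<open>linear T\<close> B] show ?thesis by linarith
qed

lemma dim_restr_adjoint_image:
  fixes L :: "'v::euclidean_space \<Rightarrow> 'v"
  assumes L: "linear L" and V: "subspace V" and W: "subspace W" and LV: "L ` V \<subseteq> W"
  shows "dim (restr_adjoint V L ` W) = dim (L ` V)"
  using restr_adjoint_works[OF L V]
  by (intro dim_image_adjoint_pair[OF V W L]) (use LV in auto)

section \<open>Chain spaces of a based complex\<close>

lemma subspace_chain_space: "subspace (chain_space Csp J)"
  by (simp add: chain_space_def)

lemma chain_space_mono: "J \<subseteq> K \<Longrightarrow> chain_space Csp J \<subseteq> chain_space Csp K"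
  unfolding chain_space_def by (rule span_mono) auto

lemma chain_space_empty: "chain_space Csp {} = {0}"
  by (simp add: chain_space_def)

lemma chain_space_singleton: "subspace (Csp \<sigma>) \<Longrightarrow> chain_space Csp {\<sigma>} = Csp \<sigma>"
  by (simp add: chain_space_def)

lemma chain_space_Un:
  "chain_space Csp (J \<union> K) = {x + y |x y. x \<in> chain_space Csp J \<and> y \<in> chain_space Csp K}"
  by (simp add: chain_space_def UN_Un span_Un)

locale based_complex =
  fixes I :: "'i set" and deg :: "'i \<Rightarrow> nat" and Csp :: "'i \<Rightarrow> 'v::euclidean_space set"
    and bd :: "'v \<Rightarrow> 'v"
  assumes based: "based_chain_complex I deg Csp bd"
begin

abbreviation C :: "nat \<Rightarrow> 'v set" where "C \<equiv> Cn I deg Csp"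

lemma subspace_summand: "\<sigma> \<in> I \<Longrightarrow> subspace (Csp \<sigma>)"
  and summands_orthogonal:
    "\<sigma> \<in> I \<Longrightarrow> \<tau> \<in> I \<Longrightarrow> \<sigma> \<noteq> \<tau> \<Longrightarrow> x \<in> Csp \<sigma> \<Longrightarrow> y \<in> Csp \<tau> \<Longrightarrow> x \<bullet> y = 0"
  and linear_bd: "linear bd"
  and bd_summand:
    "\<sigma> \<in> I \<Longrightarrow> x \<in> Csp \<sigma> \<Longrightarrow> bd x \<in> (if deg \<sigma> = 0 then {0} else C (deg \<sigma> - 1))"
  and bd_bd: "x \<in> chain_space Csp I \<Longrightarrow> bd (bd x) = 0"
  using based by (simp_all add: based_chain_complex_def)

lemma chain_space_orthogonal:
  assumes "J \<subseteq> I" "K \<subseteq> I" "J \<inter> K = {}" "x \<in> chain_space Csp J" "y \<in> chain_space Csp K"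
  shows "x \<bullet> y = 0"
proof -
  let ?U = "\<Union>\<sigma>\<in>J. Csp \<sigma>" and ?V = "\<Union>\<sigma>\<in>K. Csp \<sigma>"
  have generators: "orthogonal v u" if "u \<in> ?U" "v \<in> ?V" for u v
  proof -
    from that obtain \<sigma> \<tau> where "\<sigma> \<in> J" "u \<in> Csp \<sigma>" "\<tau> \<in> K" "v \<in> Csp \<tau>" by blast
    with assms(1-3) summands_orthogonal[of \<tau> \<sigma> v u] show ?thesis
      by (auto simp: orthogonal_def)
  qed
  have "orthogonal v x" if "v \<in> ?V" for v
    using assms(4) generators[OF _ that] unfolding chain_space_def by (rule orthogonal_to_span)
  then have "orthogonal x y"
    using orthogonal_to_span[of y ?V x] assms(5) orthogonal_commute unfolding chain_space_def by blast
  then show ?thesis by (simp add: orthogonal_def)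
qed

lemma orth_proj_chain_space:
  assumes "J \<subseteq> I" "K \<subseteq> I" "y \<in> chain_space Csp J"
  shows "orth_proj (chain_space Csp K) y \<in> chain_space Csp (J \<inter> K)"
proof -
  have "y \<in> chain_space Csp ((J \<inter> K) \<union> (J - K))" using assms(3) by (simp only: Int_Diff_Un)
  then obtain u v where uv: "u \<in> chain_space Csp (J \<inter> K)" "v \<in> chain_space Csp (J - K)" "y = u + v"
    unfolding chain_space_Un by blast
  have "u \<in> chain_space Csp K" using uv(1) chain_space_mono[of "J \<inter> K" K] by blast
  moreover have "\<forall>z\<in>chain_space Csp K. v \<bullet> z = 0"
    by (intro ballI chain_space_orthogonal[of "J - K" K]) (use assms(1,2) uv(2) in auto)
  ultimately have "orth_proj (chain_space Csp K) y = u"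
    unfolding uv(3) by (rule orth_proj_add_orthogonal[OF subspace_chain_space])
  with uv(1) show ?thesis by simp
qed

lemma subspace_C: "subspace (C k)"
  by (simp add: Cn_def subspace_chain_space)

lemma C_subset_chain_space: "C k \<subseteq> chain_space Csp I"
  unfolding Cn_def by (rule chain_space_mono) auto

lemma bd_C: "x \<in> C k \<Longrightarrow> bd x \<in> (if k = 0 then {0} else C (k - 1))"
proof -
  let ?T = "if k = 0 then {0} else C (k - 1)"
  let ?U = "\<Union>\<sigma>\<in>{\<sigma>\<in>I. deg \<sigma> = k}. Csp \<sigma>"
  assume "x \<in> C k"
  then have "bd x \<in> span (bd ` ?U)"
    unfolding span_linear_image[OF linear_bd] by (simp add: Cn_def chain_space_def)
  moreover have "span (bd ` ?U) \<subseteq> ?T"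
    using bd_summand subspace_C by (intro span_minimal) force+
  ultimately show "bd x \<in> ?T" by blast
qed

end

section \<open>The Morse complex of a single pairing\<close>

locale single_pairing_complex = based_complex I deg Csp bd
  for I :: "'i set" and deg and Csp :: "'i \<Rightarrow> 'v::euclidean_space set" and bd +
  fixes n :: nat and \<alpha> \<beta> :: 'i
  assumes pairing: "single_pairing I deg Csp bd n \<alpha> \<beta>"
begin

abbreviation R :: "'i set" where "R \<equiv> I - {\<alpha>, \<beta>}"
abbreviation M :: "nat \<Rightarrow> 'v set" where "M \<equiv> CM I deg Csp \<alpha> \<beta>"
abbreviation \<pi>\<^sub>R :: "'v \<Rightarrow> 'v" where "\<pi>\<^sub>R \<equiv> orth_proj (chain_space Csp R)"
abbreviation \<pi>\<^sub>\<beta> :: "'v \<Rightarrow> 'v" where "\<pi>\<^sub>\<beta> \<equiv> orth_proj (Csp \<beta>)"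
abbreviation bd\<^sub>\<beta> :: "'v \<Rightarrow> 'v" where "bd\<^sub>\<beta> \<equiv> bd_comp Csp bd \<beta>"
abbreviation lift\<^sub>\<alpha> :: "'v \<Rightarrow> 'v" where "lift\<^sub>\<alpha> \<equiv> inv_into (Csp \<alpha>) bd\<^sub>\<beta>"
abbreviation bd\<^sub>M :: "'v \<Rightarrow> 'v" where "bd\<^sub>M \<equiv> morse_bd I Csp bd \<alpha> \<beta>"

text \<open>corr x is x minus the chain on \<alpha> whose boundary has the same \<beta>-component as bd x;
  the Morse boundary of x is bd (corr x) projected to the remaining cells.\<close>
abbreviation corr :: "'v \<Rightarrow> 'v" where "corr x \<equiv> x - lift\<^sub>\<alpha> (bd\<^sub>\<beta> x)"

lemma alpha_in_I: "\<alpha> \<in> I" and beta_in_I: "\<beta> \<in> I"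
  and deg_alpha: "deg \<alpha> = n + 1" and deg_beta: "deg \<beta> = n"
  and bij_bd_beta: "bij_betw bd\<^sub>\<beta> (Csp \<alpha>) (Csp \<beta>)"
  using pairing by (simp_all add: single_pairing_def)

lemma subspace_alpha: "subspace (Csp \<alpha>)" and subspace_beta: "subspace (Csp \<beta>)"
  using subspace_summand alpha_in_I beta_in_I by auto

lemma subspace_M: "subspace (M k)"
  by (simp add: CM_def subspace_chain_space)

lemma M_subset_C: "M k \<subseteq> C k"
  unfolding CM_def Cn_def by (rule chain_space_mono) auto

lemma M_subset_chain_space_R: "M k \<subseteq> chain_space Csp R"
  unfolding CM_def by (rule chain_space_mono) auto

lemma C_deg_alpha: "C (n + 1) = {x + a |x a. x \<in> M (n + 1) \<and> a \<in> Csp \<alpha>}"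
proof -
  have cells: "{\<sigma>\<in>I. deg \<sigma> = n + 1} = {\<sigma>\<in>R. deg \<sigma> = n + 1} \<union> {\<alpha>}"
    using alpha_in_I deg_alpha deg_beta by auto
  show ?thesis
    unfolding Cn_def CM_def cells chain_space_Un chain_space_singleton[of Csp, OF subspace_alpha] ..
qed

lemma C_deg_beta: "C n = {x + b |x b. x \<in> M n \<and> b \<in> Csp \<beta>}"
proof -
  have cells: "{\<sigma>\<in>I. deg \<sigma> = n} = {\<sigma>\<in>R. deg \<sigma> = n} \<union> {\<beta>}"
    using beta_in_I deg_alpha deg_beta by auto
  show ?thesis
    unfolding Cn_def CM_def cells chain_space_Un chain_space_singleton[of Csp, OF subspace_beta] ..
qed

lemma C_eq_M: "k \<noteq> n \<Longrightarrow> k \<noteq> n + 1 \<Longrightarrow> C k = M k"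
proof -
  assume "k \<noteq> n" "k \<noteq> n + 1"
  then have "{\<sigma>\<in>I. deg \<sigma> = k} = {\<sigma>\<in>R. deg \<sigma> = k}" using deg_alpha deg_beta by auto
  then show ?thesis by (simp add: Cn_def CM_def)
qed

lemma alpha_subset_C: "Csp \<alpha> \<subseteq> C (n + 1)"
  using C_deg_alpha subspace_0[OF subspace_M] by force

lemma proj_R_in_M: "y \<in> C k \<Longrightarrow> \<pi>\<^sub>R y \<in> M k"
proof -
  have "{\<sigma>\<in>I. deg \<sigma> = k} \<inter> R = {\<sigma>\<in>R. deg \<sigma> = k}" by blast
  then show "y \<in> C k \<Longrightarrow> \<pi>\<^sub>R y \<in> M k"
    using orth_proj_chain_space[of "{\<sigma>\<in>I. deg \<sigma> = k}" R y] by (simp add: Cn_def CM_def)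
qed

lemma proj_R_on_M: "x \<in> M k \<Longrightarrow> \<pi>\<^sub>R x = x"
  using M_subset_chain_space_R orth_proj_id[OF subspace_chain_space] by blast

lemma proj_beta_M_add: "x \<in> M k \<Longrightarrow> b \<in> Csp \<beta> \<Longrightarrow> \<pi>\<^sub>\<beta> (x + b) = b"
proof -
  assume x: "x \<in> M k" and b: "b \<in> Csp \<beta>"
  have "x \<in> chain_space Csp R" using x M_subset_chain_space_R by blast
  then have "\<forall>z\<in>Csp \<beta>. x \<bullet> z = 0"
    using chain_space_orthogonal[of R "{\<beta>}"] beta_in_I chain_space_singleton[of Csp, OF subspace_beta]
    by auto
  then have "\<pi>\<^sub>\<beta> (b + x) = b" by (rule orth_proj_add_orthogonal[OF subspace_beta b])
  then show ?thesis by (simp add: add.commute)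
qed

lemma C_proj_beta_zero_imp_M: "y \<in> C k \<Longrightarrow> k \<noteq> n + 1 \<Longrightarrow> \<pi>\<^sub>\<beta> y = 0 \<Longrightarrow> y \<in> M k"
proof (cases "k = n")
  case True
  assume "y \<in> C k" "\<pi>\<^sub>\<beta> y = 0"
  then obtain x b where "x \<in> M n" "b \<in> Csp \<beta>" "y = x + b" using C_deg_beta True by blast
  with \<open>\<pi>\<^sub>\<beta> y = 0\<close> show ?thesis using proj_beta_M_add True by simp
qed (use C_eq_M in simp)

lemma bd_beta_eq: "bd\<^sub>\<beta> x = \<pi>\<^sub>\<beta> (bd x)"
  by (simp add: bd_comp_def)

lemma linear_bd_beta: "linear bd\<^sub>\<beta>"
  using linear_compose[OF linear_bd linear_orth_proj[OF subspace_beta]]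
  by (simp add: o_def bd_comp_def[abs_def])

lemma bd_beta_in: "bd\<^sub>\<beta> x \<in> Csp \<beta>"
  using orth_proj_works(1)[OF subspace_beta] by (simp add: bd_comp_def)

lemma lift_in: "b \<in> Csp \<beta> \<Longrightarrow> lift\<^sub>\<alpha> b \<in> Csp \<alpha>"
  and bd_beta_lift: "b \<in> Csp \<beta> \<Longrightarrow> bd\<^sub>\<beta> (lift\<^sub>\<alpha> b) = b"
  and lift_bd_beta: "a \<in> Csp \<alpha> \<Longrightarrow> lift\<^sub>\<alpha> (bd\<^sub>\<beta> a) = a"
  using bij_bd_beta by (auto simp: bij_betw_def inv_into_into f_inv_into_f)

lemma lift_0: "lift\<^sub>\<alpha> 0 = 0"
  using lift_bd_beta[OF subspace_0[OF subspace_alpha]] linear_0[OF linear_bd_beta] by simp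

lemma linear_lift_bd_beta: "linear (\<lambda>x. lift\<^sub>\<alpha> (bd\<^sub>\<beta> x))"
proof
  fix x y :: 'v and c :: real
  have "lift\<^sub>\<alpha> (bd\<^sub>\<beta> x) + lift\<^sub>\<alpha> (bd\<^sub>\<beta> y) \<in> Csp \<alpha>"
    using lift_in bd_beta_in subspace_add[OF subspace_alpha] by blast
  moreover have "bd\<^sub>\<beta> (lift\<^sub>\<alpha> (bd\<^sub>\<beta> x) + lift\<^sub>\<alpha> (bd\<^sub>\<beta> y)) = bd\<^sub>\<beta> (x + y)"
    by (simp add: linear_add[OF linear_bd_beta] bd_beta_lift bd_beta_in)
  ultimately show "lift\<^sub>\<alpha> (bd\<^sub>\<beta> (x + y)) = lift\<^sub>\<alpha> (bd\<^sub>\<beta> x) + lift\<^sub>\<alpha> (bd\<^sub>\<beta> y)"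
    using lift_bd_beta by metis
  have "c *\<^sub>R lift\<^sub>\<alpha> (bd\<^sub>\<beta> x) \<in> Csp \<alpha>"
    using lift_in bd_beta_in subspace_scale[OF subspace_alpha] by blast
  moreover have "bd\<^sub>\<beta> (c *\<^sub>R lift\<^sub>\<alpha> (bd\<^sub>\<beta> x)) = bd\<^sub>\<beta> (c *\<^sub>R x)"
    by (simp add: linear_scale[OF linear_bd_beta] bd_beta_lift bd_beta_in)
  ultimately show "lift\<^sub>\<alpha> (bd\<^sub>\<beta> (c *\<^sub>R x)) = c *\<^sub>R lift\<^sub>\<alpha> (bd\<^sub>\<beta> x)"
    using lift_bd_beta by metis
qed

lemma morse_bd_eq: "bd\<^sub>M x = \<pi>\<^sub>R (bd (corr x))"
  by (simp add: morse_bd_def linear_diff[OF linear_bd])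

lemma linear_morse_bd: "linear bd\<^sub>M"
proof -
  have "linear (\<lambda>x. bd x - bd (lift\<^sub>\<alpha> (bd\<^sub>\<beta> x)))"
    using linear_compose_sub[OF linear_bd linear_compose[OF linear_lift_bd_beta linear_bd]]
    by (simp add: o_def)
  from linear_compose[OF this linear_orth_proj[OF subspace_chain_space]]
  show ?thesis by (simp add: o_def morse_bd_def[abs_def])
qed

lemma bd_beta_M: "x \<in> M k \<Longrightarrow> k \<noteq> n + 1 \<Longrightarrow> bd\<^sub>\<beta> x = 0"
proof -
  assume x: "x \<in> M k" and k: "k \<noteq> n + 1"
  have bd_x: "bd x \<in> (if k = 0 then {0} else C (k - 1))"
    using bd_C x M_subset_C by blast
  show "bd\<^sub>\<beta> x = 0"
  proof (cases "k = 0")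
    case True
    then show ?thesis
      using bd_x linear_0[OF linear_orth_proj[OF subspace_beta]] by (simp add: bd_beta_eq)
  next
    case False
    have "{\<sigma>\<in>I. deg \<sigma> = k - 1} \<inter> {\<beta>} = {}" using deg_beta k False by auto
    moreover have "\<pi>\<^sub>\<beta> (bd x) \<in> chain_space Csp ({\<sigma>\<in>I. deg \<sigma> = k - 1} \<inter> {\<beta>})"
      using orth_proj_chain_space[of _ "{\<beta>}"] bd_x False beta_in_I
      by (simp add: Cn_def chain_space_singleton[of Csp, OF subspace_beta])
    ultimately show ?thesis by (simp add: bd_beta_eq chain_space_empty)
  qed
qed

lemma corr_in_C: "x \<in> M k \<Longrightarrow> corr x \<in> C k"
proof (cases "k = n + 1")
  case True
  assume "x \<in> M k"
  moreover have "lift\<^sub>\<alpha> (bd\<^sub>\<beta> x) \<in> C k"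
    using True alpha_subset_C lift_in bd_beta_in by blast
  ultimately show ?thesis using M_subset_C subspace_diff[OF subspace_C] by blast
qed (use bd_beta_M lift_0 M_subset_C in auto)

lemma bd_beta_corr: "bd\<^sub>\<beta> (corr x) = 0"
  by (simp add: linear_diff[OF linear_bd_beta] bd_beta_lift bd_beta_in)

lemma morse_bd_in_CM_tgt: "x \<in> M k \<Longrightarrow> bd\<^sub>M x \<in> CM_tgt I deg Csp \<alpha> \<beta> k"
proof -
  assume "x \<in> M k"
  then have "bd (corr x) \<in> (if k = 0 then {0} else C (k - 1))"
    using bd_C corr_in_C by blast
  then show ?thesis
    using proj_R_in_M linear_0[OF linear_orth_proj[OF subspace_chain_space]]
    by (auto simp: CM_tgt_def morse_bd_eq split: if_splits)
qed

text \<open>bd (corr x) has no \<beta>-component, and outside degree n + 2 it has no \<alpha>-component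
  either, so it already lies in the remaining cells.\<close>
lemma morse_bd_eq_bd_corr:
  assumes "x \<in> M k" "k \<noteq> n + 2"
  shows "bd\<^sub>M x = bd (corr x)"
proof (cases "k = 0")
  case True
  then have "bd (corr x) = 0"
    using bd_C corr_in_C assms(1) by fastforce
  then show ?thesis
    using linear_0[OF linear_orth_proj[OF subspace_chain_space]] by (simp add: morse_bd_eq)
next
  case False
  then have "bd (corr x) \<in> C (k - 1)"
    using bd_C corr_in_C assms(1) by fastforce
  moreover have "\<pi>\<^sub>\<beta> (bd (corr x)) = 0"
    using bd_beta_corr by (simp add: bd_beta_eq)
  ultimately have "bd (corr x) \<in> M (k - 1)"
    using C_proj_beta_zero_imp_M assms(2) False by simp
  then show ?thesis using proj_R_on_M by (simp add: morse_bd_eq)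
qed

lemma morse_bd_eq_bd: "x \<in> M k \<Longrightarrow> k \<noteq> n + 1 \<Longrightarrow> k \<noteq> n + 2 \<Longrightarrow> bd\<^sub>M x = bd x"
  using morse_bd_eq_bd_corr bd_beta_M lift_0 by simp

text \<open>For b in Csp \<beta> take a on \<alpha> whose boundary has \<beta>-component b; then bd a = c + b
  with c in M n, and bd (bd a) = 0 gives bd b = - bd c.\<close>
lemma image_bd_M: "k \<noteq> n + 1 \<Longrightarrow> bd ` M k = bd ` C k"
proof (cases "k = n")
  case True
  have "bd ` C n \<subseteq> bd ` M n"
  proof
    fix v assume "v \<in> bd ` C n"
    then obtain y where "y \<in> C n" "v = bd y" by blast
    then obtain x b where xb: "x \<in> M n" "b \<in> Csp \<beta>" "v = bd (x + b)"
      unfolding C_deg_beta by blast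
    define a where "a = lift\<^sub>\<alpha> b"
    have a: "a \<in> Csp \<alpha>" "bd\<^sub>\<beta> a = b" using lift_in bd_beta_lift xb(2) a_def by auto
    have "bd a \<in> C n" using bd_C[OF subsetD[OF alpha_subset_C a(1)]] by simp
    then obtain c b' where cb: "c \<in> M n" "b' \<in> Csp \<beta>" "bd a = c + b'"
      using C_deg_beta by blast
    have "b' = b" using proj_beta_M_add[OF cb(1,2)] cb(3) a(2) by (simp add: bd_beta_eq)
    have "bd c + bd b = 0"
      using bd_bd[OF subsetD[OF C_subset_chain_space subsetD[OF alpha_subset_C a(1)]]]
      unfolding cb(3) \<open>b' = b\<close> linear_add[OF linear_bd] .
    then have "v = bd (x - c)"
      unfolding xb(3) linear_add[OF linear_bd] linear_diff[OF linear_bd]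
      by (simp add: eq_neg_iff_add_eq_0[symmetric] add.commute)
    moreover have "x - c \<in> M n" using xb(1) cb(1) subspace_diff[OF subspace_M] by blast
    ultimately show "v \<in> bd ` M n" by blast
  qed
  with True M_subset_C show ?thesis by blast
qed (use C_eq_M in simp)

lemma image_morse_bd_eq_image_bd:
  assumes "k \<noteq> n + 1" "k \<noteq> n + 2"
  shows "bd\<^sub>M ` M k = bd ` C k"
proof -
  have "bd\<^sub>M ` M k = bd ` M k" using morse_bd_eq_bd assms by (intro image_cong) auto
  with image_bd_M[OF assms(1)] show ?thesis by simp
qed

lemma dim_image_morse_bd_above: "dim (bd\<^sub>M ` M (n + 2)) = dim (bd ` C (n + 2))"
proof -
  have "bd\<^sub>M ` M (n + 2) = \<pi>\<^sub>R ` bd ` C (n + 2)"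
    using bd_beta_M[of _ "n + 2"] lift_0 C_eq_M[of "n + 2"]
    by (auto simp: morse_bd_eq image_image intro!: image_cong)
  moreover have S: "subspace (bd ` C (n + 2))"
    by (rule linear_subspace_image[OF linear_bd subspace_C])
  moreover have "inj_on \<pi>\<^sub>R (bd ` C (n + 2))"
    unfolding linear_inj_on_iff_eq_0[OF linear_orth_proj[OF subspace_chain_space] S]
  proof (intro ballI impI)
    fix v assume "v \<in> bd ` C (n + 2)" and "\<pi>\<^sub>R v = 0"
    then obtain y where y: "y \<in> C (n + 2)" "v = bd y" by blast
    then obtain c a where ca: "c \<in> M (n + 1)" "a \<in> Csp \<alpha>" "v = c + a"
      using bd_C[OF y(1)] C_deg_alpha by auto
    have "\<forall>z\<in>chain_space Csp R. a \<bullet> z = 0"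
      using chain_space_orthogonal[of "{\<alpha>}" R a] ca(2) alpha_in_I
      by (simp add: chain_space_singleton[of Csp, OF subspace_alpha])
    then have "\<pi>\<^sub>R v = c"
      unfolding ca(3) using ca(1) M_subset_chain_space_R
      by (intro orth_proj_add_orthogonal[OF subspace_chain_space]) auto
    with \<open>\<pi>\<^sub>R v = 0\<close> ca(3) have "v = a" by simp
    moreover have "bd v = 0"
      using y bd_bd C_subset_chain_space by blast
    ultimately have "bd\<^sub>\<beta> a = 0"
      using linear_0[OF linear_orth_proj[OF subspace_beta]] by (simp add: bd_beta_eq)
    then show "v = 0" using lift_bd_beta[OF ca(2)] lift_0 \<open>v = a\<close> by simp
  qed
  ultimately show ?thesis
    using dim_image_eq[OF linear_orth_proj[OF subspace_chain_space], where S = "bd ` C (n + 2)"]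
    by (simp add: span_eq_iff[THEN iffD2])
qed

lemma image_morse_bd_deg_alpha: "bd\<^sub>M ` M (n + 1) = {u \<in> bd ` C (n + 1). \<pi>\<^sub>\<beta> u = 0}"
proof
  show "bd\<^sub>M ` M (n + 1) \<subseteq> {u \<in> bd ` C (n + 1). \<pi>\<^sub>\<beta> u = 0}"
  proof
    fix u assume "u \<in> bd\<^sub>M ` M (n + 1)"
    then obtain x where "x \<in> M (n + 1)" "u = bd\<^sub>M x" by blast
    then have "u = bd (corr x)" "corr x \<in> C (n + 1)"
      using morse_bd_eq_bd_corr corr_in_C by auto
    then show "u \<in> {u \<in> bd ` C (n + 1). \<pi>\<^sub>\<beta> u = 0}"
      using bd_beta_corr by (auto simp: bd_beta_eq)
  qed
  show "{u \<in> bd ` C (n + 1). \<pi>\<^sub>\<beta> u = 0} \<subseteq> bd\<^sub>M ` M (n + 1)"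
  proof clarify
    fix y assume "y \<in> C (n + 1)" and "\<pi>\<^sub>\<beta> (bd y) = 0"
    then obtain x a where xa: "x \<in> M (n + 1)" "a \<in> Csp \<alpha>" "y = x + a"
      unfolding C_deg_alpha by blast
    from \<open>\<pi>\<^sub>\<beta> (bd y) = 0\<close> have "bd\<^sub>\<beta> x = bd\<^sub>\<beta> (- a)"
      unfolding xa(3) bd_beta_eq[symmetric] linear_add[OF linear_bd_beta] linear_neg[OF linear_bd_beta]
      by (simp add: eq_neg_iff_add_eq_0)
    then have "lift\<^sub>\<alpha> (bd\<^sub>\<beta> x) = - a"
      using lift_bd_beta subspace_neg[OF subspace_alpha xa(2)] by simp
    then have "bd\<^sub>M x = bd y"
      using morse_bd_eq_bd_corr[OF xa(1)] xa(3) by simp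
    with xa(1) show "bd y \<in> bd\<^sub>M ` M (n + 1)" by (metis image_eqI)
  qed
qed

lemma proj_beta_image_bd_deg_alpha: "\<pi>\<^sub>\<beta> ` bd ` C (n + 1) = Csp \<beta>"
proof
  show "\<pi>\<^sub>\<beta> ` bd ` C (n + 1) \<subseteq> Csp \<beta>"
    using orth_proj_works(1)[OF subspace_beta] by blast
  show "Csp \<beta> \<subseteq> \<pi>\<^sub>\<beta> ` bd ` C (n + 1)"
  proof
    fix b assume "b \<in> Csp \<beta>"
    then have "b = \<pi>\<^sub>\<beta> (bd (lift\<^sub>\<alpha> b))" and "lift\<^sub>\<alpha> b \<in> C (n + 1)"
      using bd_beta_lift lift_in alpha_subset_C by (auto simp: bd_beta_eq)
    then show "b \<in> \<pi>\<^sub>\<beta> ` bd ` C (n + 1)" by blast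
  qed
qed

lemma dim_image_morse_bd_deg_alpha:
  "dim (bd\<^sub>M ` M (n + 1)) = dim (bd ` C (n + 1)) - dim (Csp \<beta>)"
proof -
  have "dim {u \<in> bd ` C (n + 1). \<pi>\<^sub>\<beta> u = 0} + dim (\<pi>\<^sub>\<beta> ` bd ` C (n + 1)) = dim (bd ` C (n + 1))"
    by (rule dim_kernel_add_dim_image[OF linear_orth_proj[OF subspace_beta]
          linear_subspace_image[OF linear_bd subspace_C]])
  then show ?thesis unfolding image_morse_bd_deg_alpha proj_beta_image_bd_deg_alpha by linarith
qed

lemma dim_image_morse_bd:
  "dim (bd\<^sub>M ` M k) =
    (if k = n + 1 then dim (bd ` C k) - dim (Csp \<beta>) else dim (bd ` C k))"
  using dim_image_morse_bd_deg_alpha dim_image_morse_bd_above image_morse_bd_eq_image_bd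
  by (cases "k = n + 1 \<or> k = n + 2") auto

lemma subspace_CM_tgt: "subspace (CM_tgt I deg Csp \<alpha> \<beta> k)"
  by (simp add: CM_tgt_def subspace_M subspace_single_0)

end

theorem mainTheorem14:
  fixes I :: "'i set" and deg :: "'i \<Rightarrow> nat" and Csp :: "'i \<Rightarrow> 'v::euclidean_space set"
    and bd :: "'v \<Rightarrow> 'v" and n :: nat and \<alpha> \<beta> :: 'i
  assumes "based_chain_complex I deg Csp bd"
    and "single_pairing I deg Csp bd n \<alpha> \<beta>"
  shows "\<forall>i. dim (restr_adjoint (CM I deg Csp \<alpha> \<beta> i) (morse_bd I Csp bd \<alpha> \<beta>)
                    ` CM_tgt I deg Csp \<alpha> \<beta> i)
            = dim (morse_bd I Csp bd \<alpha> \<beta> ` CM I deg Csp \<alpha> \<beta> i)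
          \<and> dim (morse_bd I Csp bd \<alpha> \<beta> ` CM I deg Csp \<alpha> \<beta> i)
            = (if i = n + 1 then dim (bd ` Cn I deg Csp i) - dim (Csp \<beta>)
               else dim (bd ` Cn I deg Csp i))"
proof -
  interpret single_pairing_complex I deg Csp bd n \<alpha> \<beta>
    by unfold_locales (fact assms)+
  have "dim (restr_adjoint (M i) bd\<^sub>M ` CM_tgt I deg Csp \<alpha> \<beta> i) = dim (bd\<^sub>M ` M i)" for i
    using morse_bd_in_CM_tgt
    by (intro dim_restr_adjoint_image[OF linear_morse_bd subspace_M subspace_CM_tgt]) blast
  with dim_image_morse_bd show ?thesis by simp
qed

end
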